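(* Let $d\ge1$ and $1\le p<\infty$, and suppose $\tilde S$ is bounded from $L^p(\mathbb{R}^d)$ to $L^{p,\infty}(\mathbb{R}^d)$ (unweighted). Let $w$ be a weight satisfying the $A_\infty$ condition with constants $C_w$ and $\delta\in(0,1]$. Then for all $\lambda>0$, $A>1$, $\gamma>0$ and all $f$ (for which $\{\tilde Sf>\lambda\}$ has finite Lebesgue measure), $$w\{x:\tilde Sf(x)>A\lambda,\ M^\sharp_pf(x)\le\gamma\lambda\}\le C\,C_w\Big(\frac{\gamma}{A-1}\Big)^{p\delta}w\{x:\tilde Sf(x)>\lambda\},$$ where $C$ depends only on $p$, $d$ and the $L^p\to L^{p,\infty}$ norm of $\tilde S$.
   Context: $A_tf(x)=\frac{1}{|B(0,t)|}\int_{B(0,t)}f(x+y)\,dy$. $V^2(a_t)_{t\in I}=\sup_{t\in I}|a_t|+\sup_{t_0<\dots<t_J\in I}(\sum_{j=1}^J|a_{t_j}-a_{t_{j-1}}|^2)^{1/2}$. $\mathcal{Q}_k$: dyadic cubes of side $2^k$; $\mathcal{Q}_k(x)$ the one containing $x$; $3\mathcal{Q}_k(x)$ its concentric triple; $E_k$ conditional expectation onto the $\sigma$-algebra generated by $\mathcal{Q}_k$. $S_kf(x)=V^2(A_tf(x)-E_kf(x))_{2^k\le t\le2^{k+1}}$, $\tilde S_kf(x)=\sup_{y\in3\mathcal{Q}_k(x)}S_kf(y)$, $\tilde Sf=(\sum_k(\tilde S_kf)^2)^{1/2}$. A weight $w$ satisfies the $A_\infty$ condition if $w(E)/w(Q)\le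 C_w(|E|/|Q|)^\delta$ for all cubes $Q$ and measurable $E\subset Q$. $M^\sharp_pf(x)=\sup_{Q\ni x}\inf_{c}(\frac1{|Q|}\int_Q|f-c|^p)^{1/p}$, supremum over cubes containing $x$. *)

theory Defs
  imports "HOL-Analysis.Analysis"
begin

definition enn_root :: "real \<Rightarrow> ennreal \<Rightarrow> ennreal" where
  "enn_root p x = (if x = \<infinity> then \<infinity> else ennreal (enn2real x powr (1 / p)))"

definition avg :: "'a::euclidean_space set \<Rightarrow> ('a \<Rightarrow> real) \<Rightarrow> real" where
  "avg S f = (LINT y:S|lebesgue. f y) / measure lebesgue S"

definition ball_avg :: "real \<Rightarrow> ('a::euclidean_space \<Rightarrow> real) \<Rightarrow> 'a \<Rightarrow> real" where
  "ball_avg t f x = (LINT y:ball 0 t|lebesgue. f (x + y)) / measure lebesgue (ball (0::'a) t)"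

definition V2 :: "(real \<Rightarrow> real) \<Rightarrow> real set \<Rightarrow> ennreal" where
  "V2 a I = (SUP t\<in>I. ennreal \<bar>a t\<bar>) +
     (SUP (J, ts) \<in> {(J, ts). J \<ge> (1::nat) \<and> (\<forall>j\<le>J. ts j \<in> I) \<and> (\<forall>j<J. ts j < ts (Suc j))}.
        ennreal (sqrt (\<Sum>j=1..J. \<bar>a (ts j) - a (ts (j - 1))\<bar>\<^sup>2)))"

definition dcube :: "int \<Rightarrow> 'a::euclidean_space \<Rightarrow> 'a set" where
  "dcube k x = {y. \<forall>i\<in>Basis. \<lfloor>(y \<bullet> i) / 2 powr k\<rfloor> = \<lfloor>(x \<bullet> i) / 2 powr k\<rfloor>}"

text \<open>Concentric triple of the dyadic cube of side 2^k containing x.\<close>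
definition dcube3 :: "int \<Rightarrow> 'a::euclidean_space \<Rightarrow> 'a set" where
  "dcube3 k x = {y. \<forall>i\<in>Basis. \<bar>\<lfloor>(y \<bullet> i) / 2 powr k\<rfloor> - \<lfloor>(x \<bullet> i) / 2 powr k\<rfloor>\<bar> \<le> 1}"

definition Ek :: "int \<Rightarrow> ('a::euclidean_space \<Rightarrow> real) \<Rightarrow> 'a \<Rightarrow> real" where
  "Ek k f x = avg (dcube k x) f"

definition Sk :: "int \<Rightarrow> ('a::euclidean_space \<Rightarrow> real) \<Rightarrow> 'a \<Rightarrow> ennreal" where
  "Sk k f x = V2 (\<lambda>t. ball_avg t f x - Ek k f x) {2 powr k .. 2 powr (k + 1)}"

definition Sk_tilde :: "int \<Rightarrow> ('a::euclidean_space \<Rightarrow> real) \<Rightarrow> 'a \<Rightarrow> ennreal" where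
  "Sk_tilde k f x = (SUP y\<in>dcube3 k x. Sk k f y)"

definition S_tilde :: "('a::euclidean_space \<Rightarrow> real) \<Rightarrow> 'a \<Rightarrow> ennreal" where
  "S_tilde f x = enn_root 2 (\<Sum>\<^sub>\<infinity>k\<in>(UNIV::int set). (Sk_tilde k f x)\<^sup>2)"

definition cube :: "'a::euclidean_space \<Rightarrow> real \<Rightarrow> 'a set" where
  "cube a s = box a (a + (\<Sum>i\<in>Basis. s *\<^sub>R i))"

definition sharp_max :: "real \<Rightarrow> ('a::euclidean_space \<Rightarrow> real) \<Rightarrow> 'a \<Rightarrow> ennreal" where
  "sharp_max p f x = (SUP (a, s) \<in> {(a, s). s > 0 \<and> x \<in> cube a s}.
      (INF c::real. enn_root p ((\<integral>\<^sup>+ y\<in>cube a s. ennreal (\<bar>f y - c\<bar> powr p) \<partial>lebesgue)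
                                / emeasure lebesgue (cube a s))))"

definition wmeasure :: "('a::euclidean_space \<Rightarrow> real) \<Rightarrow> 'a set \<Rightarrow> ennreal" where
  "wmeasure w E = (\<integral>\<^sup>+ x\<in>E. ennreal (w x) \<partial>lebesgue)"

definition weight :: "('a::euclidean_space \<Rightarrow> real) \<Rightarrow> bool" where
  "weight w \<longleftrightarrow> w \<in> borel_measurable lebesgue \<and> (\<forall>x. 0 \<le> w x) \<and>
     (\<forall>K. compact K \<longrightarrow> wmeasure w K < \<infinity>)"

definition A_infty :: "('a::euclidean_space \<Rightarrow> real) \<Rightarrow> real \<Rightarrow> real \<Rightarrow> bool" where
  "A_infty w Cw \<delta> \<longleftrightarrow> weight w \<and>
     (\<forall>a s E. s > 0 \<longrightarrow> E \<in> sets lebesgue \<longrightarrow> E \<subseteq> cube a s \<longrightarrow>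
        wmeasure w E \<le> ennreal (Cw * (measure lebesgue E / measure lebesgue (cube a s)) powr \<delta>)
                         * wmeasure w (cube a s))"

definition Lp_fun :: "real \<Rightarrow> ('a::euclidean_space \<Rightarrow> real) \<Rightarrow> bool" where
  "Lp_fun p f \<longleftrightarrow> f \<in> borel_measurable lebesgue \<and>
     (\<integral>\<^sup>+ x. ennreal (\<bar>f x\<bar> powr p) \<partial>lebesgue) < \<infinity>"

definition locally_integrable :: "('a::euclidean_space \<Rightarrow> real) \<Rightarrow> bool" where
  "locally_integrable f \<longleftrightarrow> (\<forall>K. compact K \<longrightarrow> set_integrable lebesgue K f)"

end

theory Submission
  imports Defs
begin

(*
  The level set Omega = {S~f > l} has finite measure, and each of its points lies in a dyadic
  cube contained in Omega: S~_k f is constant on dyadic cubes of level k, so S~f(x) is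
  controlled by its values at points of arbitrarily large cubes around x.  Hence Omega is the
  disjoint union of its maximal dyadic cubes Q.  For such a Q of side 2^m, a point y of its
  parent lies outside Omega; at x in Q the levels k > m of S~f agree with those at y, hence
  contribute at most l in l^2, while the levels k <= m only see f on the enlarged cube 9Q and
  are unchanged when f is replaced by g = (f - c) 1_{9Q}.  Choosing c from M#_p f <= gamma l
  gives ||g||_p^p <~ (gamma l)^p |Q|, and the weak-type bound for S~ applied to g at height
  (A-1) l yields |{S~f > A l, M#_p f <= gamma l} intersect Q| <~ (gamma/(A-1))^p |Q|.
  The A_infinity condition turns this into the weighted estimate on Q; summing over the
  maximal cubes gives the theorem.
*)

section \<open>Dyadic cubes\<close>

lemma floor_dyadic_nest:
  fixes u :: real assumes "j \<le> k"
  shows "\<lfloor>u / 2 powr k\<rfloor> = \<lfloor>u / 2 powr j\<rfloor> div 2 ^ nat (k - j)"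
proof -
  have "2 powr k = 2 powr j * real_of_int (2 ^ nat (k - j))"
    using assms by (simp add: powr_realpow[symmetric] powr_add[symmetric])
  then show ?thesis
    using floor_divide_real_eq_div[of "2 ^ nat (k - j)" "u / 2 powr j"] by simp
qed

lemma mem_dcube [simp]: "x \<in> dcube k x"
  by (simp add: dcube_def)

lemma dcube_eq: "y \<in> dcube k x \<Longrightarrow> dcube k y = dcube k x"
  by (auto simp: dcube_def)

lemma dcube3_eq: "y \<in> dcube k x \<Longrightarrow> dcube3 k y = dcube3 k x"
  by (auto simp: dcube_def dcube3_def)

lemma dcube_mono: "j \<le> k \<Longrightarrow> dcube j x \<subseteq> dcube k x"
  unfolding dcube_def using floor_dyadic_nest by auto

definition dcorner :: "int \<Rightarrow> 'a::euclidean_space \<Rightarrow> 'a" where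
  "dcorner k x = (\<Sum>i\<in>Basis. (of_int \<lfloor>x \<bullet> i / 2 powr k\<rfloor> * 2 powr k) *\<^sub>R i)"

lemma dcorner_inner: "i \<in> Basis \<Longrightarrow> dcorner k x \<bullet> i = of_int \<lfloor>x \<bullet> i / 2 powr k\<rfloor> * 2 powr k"
  by (simp add: dcorner_def inner_sum_left inner_Basis if_distrib cong: if_cong)

lemma dcorner_eq: "y \<in> dcube k x \<Longrightarrow> dcorner k y = dcorner k x"
  by (simp add: dcorner_def dcube_def)

lemma ones_inner: "i \<in> Basis \<Longrightarrow> (\<Sum>j\<in>Basis. s *\<^sub>R j) \<bullet> i = (s::real)"
  by (simp add: inner_sum_left inner_Basis if_distrib cong: if_cong)

lemma dcube_corner:
  "dcube k x = {y. \<forall>i\<in>Basis. dcorner k x \<bullet> i \<le> y \<bullet> i \<and> y \<bullet> i < dcorner k x \<bullet> i + 2 powr k}"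
  unfolding dcube_def
  by (auto simp: dcorner_inner floor_eq_iff pos_le_divide_eq pos_divide_less_eq algebra_simps)

lemma dcube_lebesgue [measurable]: "dcube k x \<in> sets lebesgue"
proof -
  have "dcube k x \<in> sets borel" unfolding dcube_corner by measurable
  then show ?thesis by simp
qed

lemma mem_cube: "y \<in> cube b r \<longleftrightarrow> (\<forall>i\<in>Basis. b \<bullet> i < y \<bullet> i \<and> y \<bullet> i < b \<bullet> i + r)"
  unfolding cube_def by (auto simp: mem_box ones_inner inner_add_left)

lemma cube_lebesgue [measurable]: "cube a s \<in> sets lebesgue"
  unfolding cube_def by simp

lemma emeasure_cube:
  "s \<ge> 0 \<Longrightarrow> emeasure lebesgue (cube (a::'a) s) = ennreal (s ^ DIM('a::euclidean_space))"
  unfolding cube_def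
  by (simp add: emeasure_completion emeasure_lborel_box_eq ones_inner inner_add_left prod_constant)

lemma measure_cube: "s \<ge> 0 \<Longrightarrow> measure lebesgue (cube (a::'a) s) = s ^ DIM('a::euclidean_space)"
  unfolding measure_def by (subst emeasure_cube) auto

lemma cube_sub_dcube: "cube (dcorner k x) (2 powr k) \<subseteq> dcube k x"
  by (auto simp: dcube_corner mem_cube less_imp_le)

lemma dcube_sub_cbox:
  "dcube k x \<subseteq> cbox (dcorner k x) (dcorner k x + (\<Sum>i\<in>Basis. 2 powr k *\<^sub>R i))"
  unfolding dcube_corner by (auto simp: mem_box ones_inner inner_add_left less_imp_le)

lemma dcube_diff_cube_null: "dcube k x - cube (dcorner k x) (2 powr k) \<in> null_sets lebesgue"
proof (rule completion.complete2)
  let ?b = "dcorner k x + (\<Sum>i\<in>Basis. 2 powr k *\<^sub>R i)"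
  show "dcube k x - cube (dcorner k x) (2 powr k) \<subseteq> cbox (dcorner k x) ?b - box (dcorner k x) ?b"
    using dcube_sub_cbox unfolding cube_def by blast
  show "cbox (dcorner k x) ?b - box (dcorner k x) ?b \<in> null_sets lebesgue"
    by (rule null_sets_completionI[OF null_sets_cbox_Diff_box])
qed

lemma emeasure_dcube:
  "emeasure lebesgue (dcube k (x::'a)) = ennreal ((2 powr k) ^ DIM('a::euclidean_space))"
proof -
  have "cube (dcorner k x) (2 powr k) = dcube k x - (dcube k x - cube (dcorner k x) (2 powr k))"
    using cube_sub_dcube by blast
  then have "emeasure lebesgue (dcube k x) = emeasure lebesgue (cube (dcorner k x) (2 powr k))"
    by (metis emeasure_Diff_null_set dcube_diff_cube_null dcube_lebesgue)
  also have "\<dots> = ennreal ((2 powr k) ^ DIM('a))"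
    by (rule emeasure_cube) simp
  finally show ?thesis .
qed

lemma measure_dcube: "measure lebesgue (dcube k (x::'a)) = (2 powr k) ^ DIM('a::euclidean_space)"
  unfolding measure_def by (subst emeasure_dcube) auto

lemma dyadic_countable: "countable {dcube k (x::'a::euclidean_space) | k x. True}"
proof -
  define g where "g = (\<lambda>(k::int, \<phi>::'a \<Rightarrow> int). {y::'a. \<forall>i\<in>Basis. \<lfloor>y \<bullet> i / 2 powr k\<rfloor> = \<phi> i})"
  have "{dcube k x | k x. True} \<subseteq> g ` (UNIV \<times> (Basis \<rightarrow>\<^sub>E UNIV))"
  proof
    fix Q :: "'a set" assume "Q \<in> {dcube k x | k x. True}"
    then obtain k and x :: 'a where Q: "Q = dcube k x" by auto
    have "Q = g (k, restrict (\<lambda>i. \<lfloor>x \<bullet> i / 2 powr k\<rfloor>) Basis)"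
      unfolding Q g_def dcube_def by auto
    then show "Q \<in> g ` (UNIV \<times> (Basis \<rightarrow>\<^sub>E UNIV))" by force
  qed
  moreover have "countable (g ` (UNIV \<times> (Basis \<rightarrow>\<^sub>E (UNIV :: int set))))"
    by (intro countable_image countable_SIGMA countable_PiE) auto
  ultimately show ?thesis by (rule countable_subset)
qed

lemma dyadic_const_measurable:
  fixes h :: "'a::euclidean_space \<Rightarrow> 'b::topological_space"
  assumes "\<And>x y. y \<in> dcube k x \<Longrightarrow> h y = h x"
  shows "h \<in> borel_measurable lebesgue"
proof (rule borel_measurableI)
  fix S :: "'b set"
  have "h -` S \<inter> space lebesgue = \<Union>{dcube k x | x. h x \<in> S}"
  proof (intro equalityI subsetI)
    fix y assume "y \<in> h -` S \<inter> space lebesgue"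
    then show "y \<in> \<Union>{dcube k x | x. h x \<in> S}" using mem_dcube[of y k] by blast
  next
    fix y assume "y \<in> \<Union>{dcube k x | x. h x \<in> S}"
    then obtain x where "y \<in> dcube k x" "h x \<in> S" by blast
    then show "y \<in> h -` S \<inter> space lebesgue" using assms by simp
  qed
  also have "\<dots> \<in> sets lebesgue"
  proof (rule sets.countable_Union)
    show "countable {dcube k x | x. h x \<in> S}"
      by (rule countable_subset[OF _ dyadic_countable]) auto
  qed auto
  finally show "h -` S \<inter> space lebesgue \<in> sets lebesgue" .
qed

section \<open>The square sum behind S~ and its locality\<close>

definition sq_sum :: "('a::euclidean_space \<Rightarrow> real) \<Rightarrow> 'a \<Rightarrow> ennreal" where
  "sq_sum f x = (\<Sum>\<^sub>\<infinity>k\<in>(UNIV::int set). (Sk_tilde k f x)\<^sup>2)"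

lemma ennreal_summable [simp]: "(g :: _ \<Rightarrow> ennreal) summable_on A"
  by (simp add: nonneg_summable_on_complete)

lemma S_tilde_gt_iff:
  assumes "\<mu> \<ge> 0"
  shows "S_tilde f x > ennreal \<mu> \<longleftrightarrow> sq_sum f x > ennreal (\<mu>\<^sup>2)"
proof (cases "sq_sum f x" rule: ennreal_cases)
  case top then show ?thesis by (simp add: S_tilde_def sq_sum_def[symmetric] enn_root_def)
next
  case (real t)
  then have "S_tilde f x = ennreal (sqrt t)"
    by (simp add: S_tilde_def sq_sum_def[symmetric] enn_root_def powr_half_sqrt)
  moreover have "sqrt t > \<mu> \<longleftrightarrow> t > \<mu>\<^sup>2"
    using real(1) assms
    by (metis abs_of_nonneg real_sqrt_abs real_sqrt_less_iff real_sqrt_pow2 power_strict_mono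
        zero_le_numeral zero_less_numeral sqrt_ge_absD)
  ultimately show ?thesis using real assms by (simp add: ennreal_less_iff)
qed

text \<open>S~_k f is constant on the dyadic cubes of level k, since its defining supremum runs
  over the triple of that cube.\<close>
lemma Sk_tilde_eq: "y \<in> dcube k x \<Longrightarrow> Sk_tilde k f y = Sk_tilde k f x"
  by (simp add: Sk_tilde_def dcube3_eq)

lemma Sk_tilde_measurable [measurable]: "Sk_tilde k f \<in> borel_measurable lebesgue"
  by (rule dyadic_const_measurable[of k]) (rule Sk_tilde_eq)

lemma sq_sum_measurable [measurable]: "sq_sum f \<in> borel_measurable lebesgue"
proof -
  define e where "e = from_nat_into (UNIV :: int set)"
  have bij: "bij_betw e UNIV (UNIV::int set)"
    unfolding e_def by (rule bij_betw_from_nat_into) (auto simp: infinite_UNIV_int)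
  have "sq_sum f = (\<lambda>x. \<Sum>n. (Sk_tilde (e n) f x)\<^sup>2)"
  proof
    fix x
    have "sq_sum f x = (\<Sum>\<^sub>\<infinity>n\<in>UNIV. (Sk_tilde (e n) f x)\<^sup>2)"
      unfolding sq_sum_def by (rule infsum_reindex_bij_betw[OF bij, symmetric])
    also have "\<dots> = (\<Sum>n. (Sk_tilde (e n) f x)\<^sup>2)"
      by (rule sums_unique[OF has_sum_imp_sums[OF has_sum_infsum]]) simp
    finally show "sq_sum f x = (\<Sum>n. (Sk_tilde (e n) f x)\<^sup>2)" .
  qed
  also have "\<dots> \<in> borel_measurable lebesgue" by measurable
  finally show ?thesis .
qed

lemma S_tilde_gt_measurable [measurable]:
  "\<mu> \<ge> 0 \<Longrightarrow> {x. S_tilde f x > ennreal \<mu>} \<in> sets lebesgue"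
proof -
  assume "\<mu> \<ge> 0"
  then have "{x. S_tilde f x > ennreal \<mu>} = {x \<in> space lebesgue. sq_sum f x > ennreal (\<mu>\<^sup>2)}"
    by (simp add: S_tilde_gt_iff)
  also have "\<dots> \<in> sets lebesgue" by measurable
  finally show ?thesis .
qed

text \<open>The levels above m of the square sum at x coincide with those at any y in the dyadic
  cube of level m+1 containing x, so they are bounded by the square sum at y.\<close>
lemma sq_sum_upper_levels:
  assumes "y \<in> dcube (m+1) x"
  shows "(\<Sum>\<^sub>\<infinity>k\<in>{m<..}. (Sk_tilde k f x)\<^sup>2) \<le> sq_sum f y"
proof -
  have "(\<Sum>\<^sub>\<infinity>k\<in>{m<..}. (Sk_tilde k f x)\<^sup>2) = (\<Sum>\<^sub>\<infinity>k\<in>{m<..}. (Sk_tilde k f y)\<^sup>2)"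
  proof (rule infsum_cong)
    fix k assume "k \<in> {m<..}"
    then have "y \<in> dcube k x" using dcube_mono[of "m+1" k x] assms by auto
    then show "(Sk_tilde k f x)\<^sup>2 = (Sk_tilde k f y)\<^sup>2" by (simp add: Sk_tilde_eq)
  qed
  also have "\<dots> \<le> sq_sum f y"
    unfolding sq_sum_def by (rule infsum_mono_neutral) auto
  finally show ?thesis .
qed

lemma sq_sum_local:
  assumes "\<And>k. k \<le> m \<Longrightarrow> Sk_tilde k f x = Sk_tilde k g x" and "y \<in> dcube (m+1) x"
  shows "sq_sum f x \<le> sq_sum g x + sq_sum f y"
proof -
  have "(UNIV::int set) = {..m} \<union> {m<..}" by auto
  then have "sq_sum f x = (\<Sum>\<^sub>\<infinity>k\<in>{..m} \<union> {m<..}. (Sk_tilde k f x)\<^sup>2)"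
    unfolding sq_sum_def by simp
  also have "\<dots> = (\<Sum>\<^sub>\<infinity>k\<in>{..m}. (Sk_tilde k f x)\<^sup>2) + (\<Sum>\<^sub>\<infinity>k\<in>{m<..}. (Sk_tilde k f x)\<^sup>2)"
    by (rule infsum_Un_disjoint) auto
  also have "\<dots> \<le> sq_sum g x + sq_sum f y"
  proof (rule add_mono)
    have "(\<Sum>\<^sub>\<infinity>k\<in>{..m}. (Sk_tilde k f x)\<^sup>2) = (\<Sum>\<^sub>\<infinity>k\<in>{..m}. (Sk_tilde k g x)\<^sup>2)"
      by (rule infsum_cong) (use assms(1) in auto)
    also have "\<dots> \<le> sq_sum g x"
      unfolding sq_sum_def by (rule infsum_mono_neutral) auto
    finally show "(\<Sum>\<^sub>\<infinity>k\<in>{..m}. (Sk_tilde k f x)\<^sup>2) \<le> sq_sum g x" .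
    show "(\<Sum>\<^sub>\<infinity>k\<in>{m<..}. (Sk_tilde k f x)\<^sup>2) \<le> sq_sum f y"
      by (rule sq_sum_upper_levels[OF assms(2)])
  qed
  finally show ?thesis .
qed

text \<open>The triangle inequality in l^2 turned into level sets: under the hypotheses of
  sq_sum_local, S~f(x) > A l and S~f(y) \<le> l force S~g(x) > (A-1) l.\<close>
lemma S_tilde_level_local:
  assumes loc: "\<And>k. k \<le> m \<Longrightarrow> Sk_tilde k f x = Sk_tilde k g x" and y: "y \<in> dcube (m+1) x"
    and l: "l > 0" and A: "A > 1"
    and big: "S_tilde f x > ennreal (A * l)" and small: "\<not> S_tilde f y > ennreal l"
  shows "S_tilde g x > ennreal ((A - 1) * l)"
proof (rule ccontr)
  assume "\<not> S_tilde g x > ennreal ((A - 1) * l)"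
  then have "sq_sum g x \<le> ennreal (((A - 1) * l)\<^sup>2)"
    using S_tilde_gt_iff[of "(A - 1) * l" g x] A l by (simp add: not_less)
  moreover have "sq_sum f y \<le> ennreal (l\<^sup>2)"
    using S_tilde_gt_iff[of l f y] small l by (simp add: not_less)
  ultimately have "sq_sum f x \<le> ennreal (((A - 1) * l)\<^sup>2) + ennreal (l\<^sup>2)"
    using sq_sum_local[OF loc y] by (meson add_mono order_trans)
  also have "\<dots> = ennreal (((A - 1) * l)\<^sup>2 + l\<^sup>2)" by (simp add: ennreal_plus)
  also have "\<dots> \<le> ennreal ((A * l)\<^sup>2)"
  proof (rule ennreal_leI)
    have "((A - 1) * l)\<^sup>2 + l\<^sup>2 = (A * l)\<^sup>2 - 2 * (A - 1) * l\<^sup>2"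
      by (simp add: power2_eq_square algebra_simps)
    moreover have "2 * (A - 1) * l\<^sup>2 \<ge> 0" using A by simp
    ultimately show "((A - 1) * l)\<^sup>2 + l\<^sup>2 \<le> (A * l)\<^sup>2" by linarith
  qed
  finally have "sq_sum f x \<le> ennreal ((A * l)\<^sup>2)" .
  moreover have "sq_sum f x > ennreal ((A * l)\<^sup>2)"
    using big S_tilde_gt_iff[of "A * l" f x] A l by simp
  ultimately show False by (meson leD)
qed

text \<open>If every dyadic cube around x contains a point where the square sum is at most b,
  then so is the square sum at x: any finite set of levels is seen from the smallest cube.\<close>
lemma sq_sum_bound_all_levels:
  assumes "\<And>j. \<exists>y\<in>dcube j x. sq_sum f y \<le> b"
  shows "sq_sum f x \<le> b"
  unfolding sq_sum_def
proof (rule infsum_le_finite_sums)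
  show "(\<lambda>k. (Sk_tilde k f x)\<^sup>2) summable_on UNIV" by simp
  fix F :: "int set" assume F: "finite F" "F \<subseteq> UNIV"
  show "(\<Sum>k\<in>F. (Sk_tilde k f x)\<^sup>2) \<le> b"
  proof (cases "F = {}")
    case True then show ?thesis by simp
  next
    case False
    obtain y where y: "y \<in> dcube (Min F) x" "sq_sum f y \<le> b" using assms by blast
    have "(\<Sum>k\<in>F. (Sk_tilde k f x)\<^sup>2) = (\<Sum>k\<in>F. (Sk_tilde k f y)\<^sup>2)"
    proof (rule sum.cong)
      fix k assume "k \<in> F"
      then have "Min F \<le> k" using F by simp
      then have "y \<in> dcube k x" using dcube_mono y(1) by blast
      then show "(Sk_tilde k f x)\<^sup>2 = (Sk_tilde k f y)\<^sup>2" by (simp add: Sk_tilde_eq)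
    qed simp
    also have "\<dots> = (\<Sum>\<^sub>\<infinity>k\<in>F. (Sk_tilde k f y)\<^sup>2)" using F by simp
    also have "\<dots> \<le> sq_sum f y"
      unfolding sq_sum_def by (rule infsum_mono_neutral) auto
    finally show ?thesis using y(2) by simp
  qed
qed

lemma S_tilde_level_dyadic_open:
  assumes l: "l \<ge> 0" and x: "S_tilde f x > ennreal l"
  shows "\<exists>j. dcube j x \<subseteq> {x. S_tilde f x > ennreal l}"
proof (rule ccontr)
  assume "\<nexists>j. dcube j x \<subseteq> {x. S_tilde f x > ennreal l}"
  then have "\<exists>y\<in>dcube j x. sq_sum f y \<le> ennreal (l\<^sup>2)" for j
  proof -
    obtain y where "y \<in> dcube j x" "\<not> S_tilde f y > ennreal l"
      using \<open>\<nexists>j. _\<close> by blast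
    then show ?thesis using S_tilde_gt_iff[OF l, of f y] by (auto simp: not_less)
  qed
  then have "sq_sum f x \<le> ennreal (l\<^sup>2)" by (rule sq_sum_bound_all_levels)
  moreover have "sq_sum f x > ennreal (l\<^sup>2)" using x S_tilde_gt_iff[OF l, of f x] by blast
  ultimately show False by (meson leD)
qed

section \<open>Localisation of f to an enlarged cube\<close>

lemma coord_dcube:
  assumes "y \<in> dcube k x" "i \<in> Basis" shows "\<bar>y \<bullet> i - x \<bullet> i\<bar> < 2 powr k"
  using assms dcorner_eq[OF assms(1)] mem_dcube[of x k] unfolding dcube_corner by fastforce

lemma coord_dcube3:
  assumes "y \<in> dcube3 k x" "i \<in> Basis" shows "\<bar>y \<bullet> i - x \<bullet> i\<bar> < 2 * 2 powr k"
proof -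
  define c where "c = 2 powr (real_of_int k)"
  have c: "c > 0" unfolding c_def by simp
  define u where "u = y \<bullet> i / c"
  define v where "v = x \<bullet> i / c"
  have "\<bar>\<lfloor>u\<rfloor> - \<lfloor>v\<rfloor>\<bar> \<le> 1" using assms unfolding dcube3_def u_def v_def c_def by auto
  then have "\<bar>u - v\<bar> < 2" by linarith
  then have "c * \<bar>u - v\<bar> < c * 2" using c by simp
  moreover have "\<bar>y \<bullet> i - x \<bullet> i\<bar> = c * \<bar>u - v\<bar>"
    using c by (auto simp: u_def v_def field_simps abs_mult_pos)
  ultimately show ?thesis unfolding c_def by simp
qed

text \<open>The concentric 9-fold enlargement of the dyadic cube of level m containing x0.\<close>
definition dcube9 :: "int \<Rightarrow> 'a::euclidean_space \<Rightarrow> 'a set" where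
  "dcube9 m x0 = cube (dcorner m x0 - (\<Sum>i\<in>Basis. (4 * 2 powr m) *\<^sub>R i)) (9 * 2 powr m)"

lemma dcube9_lebesgue [measurable]: "dcube9 m x0 \<in> sets lebesgue"
  by (simp add: dcube9_def)

lemma near_dcube_in_dcube9:
  assumes x: "x \<in> dcube m x0" and near: "\<And>i. i \<in> Basis \<Longrightarrow> \<bar>z \<bullet> i - x \<bullet> i\<bar> < 4 * 2 powr m"
  shows "z \<in> dcube9 m x0"
  unfolding dcube9_def mem_cube
proof
  fix i :: 'a assume i: "i \<in> Basis"
  have "dcorner m x0 \<bullet> i \<le> x \<bullet> i" "x \<bullet> i < dcorner m x0 \<bullet> i + 2 powr m"
    using x i unfolding dcube_corner by auto
  moreover have "(dcorner m x0 - (\<Sum>i\<in>Basis. (4 * 2 powr m) *\<^sub>R i)) \<bullet> i = dcorner m x0 \<bullet> i - 4 * 2 powr m"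
    using i by (simp add: inner_diff_left ones_inner)
  ultimately show "(dcorner m x0 - (\<Sum>i\<in>Basis. (4 * 2 powr m) *\<^sub>R i)) \<bullet> i < z \<bullet> i \<and>
      z \<bullet> i < (dcorner m x0 - (\<Sum>i\<in>Basis. (4 * 2 powr m) *\<^sub>R i)) \<bullet> i + 9 * 2 powr m"
    using near[OF i] unfolding abs_less_iff by (intro conjI) linarith+
qed

lemma dcube_sub_dcube9: "dcube m x0 \<subseteq> dcube9 m x0"
  using near_dcube_in_dcube9 by fastforce

text \<open>The data entering S~_k f(x), for x \<in> Q = dcube m x0 and k \<le> m, live in the
  enlargement of Q: the balls of radius \<le> 2^(k+1) around points of the triple cube \<dots>\<close>
lemma ball_in_dcube9:
  assumes x: "x \<in> dcube m x0" and k: "k \<le> m" and y: "y \<in> dcube3 k x"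
    and t: "t \<le> 2 powr (k+1)" and z: "z \<in> ball 0 t"
  shows "y + z \<in> dcube9 m x0"
proof (rule near_dcube_in_dcube9[OF x])
  fix i :: 'a assume i: "i \<in> Basis"
  have "\<bar>z \<bullet> i\<bar> \<le> norm z" using i by (rule Basis_le_norm)
  also have "norm z < 2 * 2 powr k" using z t by (simp add: powr_add)
  finally have "\<bar>z \<bullet> i\<bar> < 2 * 2 powr k" .
  moreover have "2 powr k \<le> 2 powr m" using k by simp
  moreover have "(y + z) \<bullet> i - x \<bullet> i = (y \<bullet> i - x \<bullet> i) + z \<bullet> i"
    by (simp add: inner_add_left)
  ultimately show "\<bar>(y + z) \<bullet> i - x \<bullet> i\<bar> < 4 * 2 powr m"
    using coord_dcube3[OF y i] by linarith
qed

text \<open>\<dots> and the dyadic cubes of level k containing those points.\<close>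
lemma dcube_in_dcube9:
  assumes x: "x \<in> dcube m x0" and k: "k \<le> m" and y: "y \<in> dcube3 k x"
  shows "dcube k y \<subseteq> dcube9 m x0"
proof
  fix z assume z: "z \<in> dcube k y"
  show "z \<in> dcube9 m x0"
  proof (rule near_dcube_in_dcube9[OF x])
    fix i :: 'a assume i: "i \<in> Basis"
    have "2 powr k \<le> 2 powr m" using k by simp
    then show "\<bar>z \<bullet> i - x \<bullet> i\<bar> < 4 * 2 powr m"
      using coord_dcube3[OF y i] coord_dcube[OF z i] by linarith
  qed
qed

lemma V2_cong: assumes "\<And>t. t \<in> I \<Longrightarrow> a t = b t" shows "V2 a I = V2 b I"
proof -
  have "(SUP t\<in>I. ennreal \<bar>a t\<bar>) = (SUP t\<in>I. ennreal \<bar>b t\<bar>)"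
    using assms by (intro SUP_cong) auto
  moreover have "(\<Sum>j=1..J. \<bar>a (ts j) - a (ts (j - 1))\<bar>\<^sup>2) = (\<Sum>j=1..J. \<bar>b (ts j) - b (ts (j - 1))\<bar>\<^sup>2)"
    if ts: "\<forall>j\<le>J. ts j \<in> I" for J :: nat and ts
  proof (rule sum.cong[OF refl])
    fix j assume "j \<in> {1..J}"
    then have "ts j \<in> I" "ts (j - 1) \<in> I" using ts by auto
    then show "\<bar>a (ts j) - a (ts (j - 1))\<bar>\<^sup>2 = \<bar>b (ts j) - b (ts (j - 1))\<bar>\<^sup>2" using assms by simp
  qed
  ultimately show ?thesis
    unfolding V2_def by (intro arg_cong2[where f="(+)"] SUP_cong) (auto simp: assms)
qed

lemma translate_set_integrable:
  fixes f :: "'a::euclidean_space \<Rightarrow> real"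
  assumes "set_integrable lebesgue S f"
  shows "set_integrable lebesgue {z. y + z \<in> S} (\<lambda>z. f (y + z))"
proof -
  let ?F = "\<lambda>u. indicator S u *\<^sub>R f u"
  have T: "(\<lambda>x::'a. y + (\<Sum>j\<in>Basis. (1 * (x \<bullet> j)) *\<^sub>R j)) = (\<lambda>x. y + x)"
    by (simp add: euclidean_representation)
  have "lebesgue = density (distr lebesgue lebesgue (\<lambda>x::'a. y + x)) (\<lambda>_. \<Prod>j\<in>(Basis::'a set). \<bar>1::real\<bar>)"
    using lebesgue_affine_euclidean[of "\<lambda>_. 1" y] unfolding T by simp
  then have distr: "distr lebesgue lebesgue (\<lambda>x. y + x) = (lebesgue :: 'a measure)"
    by (simp add: density_1)
  have meas: "(\<lambda>x::'a. y + x) \<in> lebesgue \<rightarrow>\<^sub>M lebesgue"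
    using lebesgue_affine_measurable[of "\<lambda>_. 1" y] unfolding T by simp
  have int: "integrable lebesgue ?F" using assms by (simp add: set_integrable_def)
  then have "integrable (distr lebesgue lebesgue (\<lambda>x. y + x)) ?F" by (simp add: distr)
  then have "integrable lebesgue (\<lambda>x. ?F (y + x))"
    using integrable_distr_eq[OF meas] int by auto
  moreover have "(\<lambda>x. ?F (y + x)) = (\<lambda>z. indicator {z. y + z \<in> S} z *\<^sub>R f (y + z))"
    by (auto simp: indicator_def)
  ultimately show ?thesis by (simp add: set_integrable_def)
qed

lemma average_shift:
  fixes F G :: "'a::euclidean_space \<Rightarrow> real"
  assumes A: "A \<in> sets lebesgue" "emeasure lebesgue A < \<infinity>" "measure lebesgue A > 0"
    and F: "set_integrable lebesgue A F" and G: "\<And>z. z \<in> A \<Longrightarrow> G z = F z - c"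
  shows "(LINT z:A|lebesgue. G z) / measure lebesgue A = (LINT z:A|lebesgue. F z) / measure lebesgue A - c"
proof -
  have ci: "set_integrable lebesgue A (\<lambda>_. c)"
    using A by (intro absolutely_integrable_on_const) (simp add: fmeasurable_def)
  have "(LINT z:A|lebesgue. G z) = (LINT z:A|lebesgue. F z - c)"
    using A G by (intro set_lebesgue_integral_cong) auto
  also have "\<dots> = (LINT z:A|lebesgue. F z) - (LINT z:A|lebesgue. c)"
    by (rule set_integral_diff(2)[OF F ci])
  also have "(LINT z:A|lebesgue. c) = measure lebesgue A * c"
    using A by (simp add: set_integral_const)
  finally show ?thesis using A(3) by (simp add: field_simps)
qed

definition localize :: "('a \<Rightarrow> real) \<Rightarrow> real \<Rightarrow> 'a set \<Rightarrow> 'a \<Rightarrow> real" where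
  "localize f c S z = (if z \<in> S then f z - c else 0)"

text \<open>Replacing f by its localisation to the enlarged cube shifts all ball averages and
  dyadic averages entering S~_k f(x), x \<in> Q, k \<le> m, by the same constant c \<dots>\<close>
lemma ball_avg_localize:
  assumes f: "set_integrable lebesgue (dcube9 m x0) f"
    and x: "x \<in> dcube m x0" and k: "k \<le> m" and y: "y \<in> dcube3 k x"
    and t: "0 < t" "t \<le> 2 powr (k+1)"
  shows "ball_avg t (localize f c (dcube9 m x0)) y = ball_avg t f y - c"
proof -
  have sub: "ball 0 t \<subseteq> {z. y + z \<in> dcube9 m x0}"
    using ball_in_dcube9[OF x k y t(2)] by auto
  have "set_integrable lebesgue (ball 0 t) (\<lambda>z. f (y + z))"
    by (rule set_integrable_subset[OF translate_set_integrable[OF f] _ sub]) simp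
  then show ?thesis
    unfolding ball_avg_def
  proof (rule average_shift[rotated 3])
    show "measure lebesgue (ball (0::'a) t) > 0"
      using t content_ball_pos by (simp add: measure_completion)
    show "emeasure lebesgue (ball (0::'a) t) < \<infinity>" using emeasure_bounded_finite by auto
    show "localize f c (dcube9 m x0) (y + z) = f (y + z) - c" if "z \<in> ball 0 t" for z
      using that sub by (auto simp: localize_def)
  qed simp
qed

lemma Ek_localize:
  assumes f: "set_integrable lebesgue (dcube9 m x0) f"
    and x: "x \<in> dcube m x0" and k: "k \<le> m" and y: "y \<in> dcube3 k x"
  shows "Ek k (localize f c (dcube9 m x0)) y = Ek k f y - c"
proof -
  have sub: "dcube k y \<subseteq> dcube9 m x0" by (rule dcube_in_dcube9[OF x k y])
  have "set_integrable lebesgue (dcube k y) f"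
    by (rule set_integrable_subset[OF f _ sub]) simp
  then show ?thesis
    unfolding Ek_def avg_def
  proof (rule average_shift[rotated 3])
    show "measure lebesgue (dcube k y) > 0" by (simp add: measure_dcube)
    show "emeasure lebesgue (dcube k y) < \<infinity>" by (simp add: emeasure_dcube)
    show "localize f c (dcube9 m x0) z = f z - c" if "z \<in> dcube k y" for z
      using that sub by (auto simp: localize_def)
  qed simp
qed

text \<open>\<dots> hence S~_k is unchanged at the levels k \<le> m on Q.\<close>
lemma Sk_tilde_localize:
  assumes f: "set_integrable lebesgue (dcube9 m x0) f"
    and x: "x \<in> dcube m x0" and k: "k \<le> m"
  shows "Sk_tilde k (localize f c (dcube9 m x0)) x = Sk_tilde k f x"
  unfolding Sk_tilde_def
proof (rule SUP_cong[OF refl])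
  fix y assume y: "y \<in> dcube3 k x"
  have "ball_avg t (localize f c (dcube9 m x0)) y - Ek k (localize f c (dcube9 m x0)) y
      = ball_avg t f y - Ek k f y" if t: "t \<in> {2 powr k .. 2 powr (real_of_int k + 1)}" for t
  proof -
    have "0 < t" using t by (smt (verit) atLeastAtMost_iff powr_gt_zero)
    then show ?thesis using ball_avg_localize[OF f x k y] Ek_localize[OF f x k y] t by simp
  qed
  then show "Sk k (localize f c (dcube9 m x0)) y = Sk k f y" unfolding Sk_def by (rule V2_cong)
qed

section \<open>The sharp maximal function\<close>

text \<open>Superlevel sets of M#_p f are unions of open cubes, hence open; sublevel sets are
  therefore measurable.\<close>
lemma sharp_max_gt_open: "open {x. sharp_max p f x > ennreal r}"
proof -
  define osc where "osc = (\<lambda>(a, s). (INF c::real. enn_root p ((\<integral>\<^sup>+ y\<in>cube a s. ennreal (\<bar>f y - c\<bar> powr p) \<partial>lebesgue)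
                                / emeasure lebesgue (cube a s))))"
  have "{x. sharp_max p f x > ennreal r} = \<Union>{cube a s | a s. s > 0 \<and> osc (a, s) > ennreal r}"
    unfolding sharp_max_def osc_def[symmetric] less_SUP_iff by blast
  then show ?thesis by (auto simp: cube_def)
qed

lemma sharp_max_le_sets [measurable]: "{x. sharp_max p f x \<le> ennreal r} \<in> sets lebesgue"
proof -
  have "closed {x. sharp_max p f x \<le> ennreal r}"
    using sharp_max_gt_open[where p=p and f=f and r=r] unfolding closed_def by (simp add: Compl_eq not_le)
  then show ?thesis by simp
qed

lemma enn_root_less:
  assumes "enn_root p v < ennreal r" "p > 0" "r > 0"
  shows "v < ennreal (r powr p)"
proof (cases v rule: ennreal_cases)
  case top then show ?thesis using assms by (simp add: enn_root_def)
next
  case (real t)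
  then have "t powr (1/p) < r" using assms by (simp add: enn_root_def ennreal_less_iff)
  then have "(t powr (1/p)) powr p < r powr p" using assms by (intro powr_less_mono2) auto
  then have "t < r powr p" using assms real by (simp add: powr_powr)
  then show ?thesis using real by (simp add: ennreal_less_iff)
qed

lemma sharp_max_good_constant:
  fixes f :: "'a::euclidean_space \<Rightarrow> real"
  assumes M: "sharp_max p f x < ennreal r" and p: "p > 0" and r: "r > 0"
    and s: "s > 0" and x: "x \<in> cube a s"
  shows "\<exists>c. (\<integral>\<^sup>+ y\<in>cube a s. ennreal (\<bar>f y - c\<bar> powr p) \<partial>lebesgue) < ennreal (r powr p * s ^ DIM('a))"
proof -
  have "(INF c::real. enn_root p ((\<integral>\<^sup>+ y\<in>cube a s. ennreal (\<bar>f y - c\<bar> powr p) \<partial>lebesgue)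
          / emeasure lebesgue (cube a s))) \<le> sharp_max p f x"
    unfolding sharp_max_def using s x by (intro SUP_upper2[of "(a, s)"]) auto
  then have "(INF c::real. enn_root p ((\<integral>\<^sup>+ y\<in>cube a s. ennreal (\<bar>f y - c\<bar> powr p) \<partial>lebesgue)
          / emeasure lebesgue (cube a s))) < ennreal r"
    using M by (rule order.strict_trans1)
  then obtain c where "enn_root p ((\<integral>\<^sup>+ y\<in>cube a s. ennreal (\<bar>f y - c\<bar> powr p) \<partial>lebesgue)
          / emeasure lebesgue (cube a s)) < ennreal r"
    unfolding INF_less_iff by blast
  then have "(\<integral>\<^sup>+ y\<in>cube a s. ennreal (\<bar>f y - c\<bar> powr p) \<partial>lebesgue) / emeasure lebesgue (cube a s)
      < ennreal (r powr p)"
    using p r by (rule enn_root_less)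
  moreover have "emeasure lebesgue (cube a s) = ennreal (s ^ DIM('a))"
    by (rule emeasure_cube) (use s in simp)
  ultimately have "(\<integral>\<^sup>+ y\<in>cube a s. ennreal (\<bar>f y - c\<bar> powr p) \<partial>lebesgue) / ennreal (s ^ DIM('a))
      < ennreal (r powr p)"
    by simp
  then show ?thesis
    using s by (intro exI[of _ c]) (simp add: divide_less_ennreal ennreal_mult)
qed

section \<open>Integrability of f and of its localisations\<close>

lemma locally_integrable_measurable:
  fixes f :: "'a::euclidean_space \<Rightarrow> real"
  assumes "locally_integrable f"
  shows "f \<in> borel_measurable lebesgue"
proof (rule borel_measurable_LIMSEQ_real)
  fix n :: nat
  have "set_integrable lebesgue (cball 0 (real n)) f"
    using assms unfolding locally_integrable_def by simp
  then show "(\<lambda>x. indicator (cball 0 (real n)) x * f x) \<in> borel_measurable lebesgue"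
    by (simp add: set_integrable_def borel_measurable_integrable)
next
  fix x :: 'a
  obtain N :: nat where N: "norm x \<le> real N" using real_arch_simple by blast
  have "eventually (\<lambda>n. indicator (cball 0 (real n)) x * f x = f x) sequentially"
    by (rule eventually_sequentiallyI[of N]) (use N in \<open>auto simp: indicator_def\<close>)
  then show "(\<lambda>n. indicator (cball 0 (real n)) x * f x) \<longlonglongrightarrow> f x"
    by (rule tendsto_eventually)
qed

text \<open>Finite p-mean oscillation on a set of finite measure implies integrability there
  (p \<ge> 1), since |f| \<le> |c| + 1 + |f - c|^p.\<close>
lemma finite_oscillation_set_integrable:
  fixes f :: "'a::euclidean_space \<Rightarrow> real"
  assumes f: "f \<in> borel_measurable lebesgue" and S: "S \<in> sets lebesgue"
    and fin: "emeasure lebesgue S < \<infinity>"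
    and I: "(\<integral>\<^sup>+ y\<in>S. ennreal (\<bar>f y - c\<bar> powr p) \<partial>lebesgue) < \<infinity>" and p: "p \<ge> 1"
  shows "set_integrable lebesgue S f"
  unfolding set_integrable_def
proof (rule integrableI_bounded)
  show "(\<lambda>x. indicator S x *\<^sub>R f x) \<in> borel_measurable lebesgue" using f S by measurable
  have pointwise: "ennreal (norm (indicator S x *\<^sub>R f x)) \<le>
      ennreal (\<bar>c\<bar> + 1) * indicator S x + ennreal (\<bar>f x - c\<bar> powr p) * indicator S x" for x
  proof (cases "x \<in> S")
    case True
    have "\<bar>f x\<bar> \<le> \<bar>c\<bar> + 1 + \<bar>f x - c\<bar> powr p"
    proof (cases "\<bar>f x - c\<bar> \<le> 1")
      case True then show ?thesis by (smt (verit) powr_ge_zero)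
    next
      case False
      then have "\<bar>f x - c\<bar> powr 1 \<le> \<bar>f x - c\<bar> powr p" using p by (intro powr_mono) auto
      then show ?thesis by auto
    qed
    then show ?thesis using True by (simp add: ennreal_plus[symmetric] del: ennreal_plus)
  qed simp
  have "(\<integral>\<^sup>+ x. ennreal (norm (indicator S x *\<^sub>R f x)) \<partial>lebesgue) \<le>
      (\<integral>\<^sup>+ x. ennreal (\<bar>c\<bar> + 1) * indicator S x + ennreal (\<bar>f x - c\<bar> powr p) * indicator S x \<partial>lebesgue)"
    by (rule nn_integral_mono) (rule pointwise)
  also have "\<dots> = ennreal (\<bar>c\<bar> + 1) * emeasure lebesgue S + (\<integral>\<^sup>+ y\<in>S. ennreal (\<bar>f y - c\<bar> powr p) \<partial>lebesgue)"
    using f S by (subst nn_integral_add) (auto simp: nn_integral_cmult_indicator)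
  also have "\<dots> < \<infinity>" using fin I by (simp add: ennreal_mult_less_top)
  finally show "(\<integral>\<^sup>+ x. ennreal (norm (indicator S x *\<^sub>R f x)) \<partial>lebesgue) < \<infinity>" .
qed

lemma localize_power_integral:
  assumes S: "S \<in> sets lebesgue"
  shows "(\<integral>\<^sup>+ x. ennreal (\<bar>localize f c S x\<bar> powr p) \<partial>lebesgue)
       = (\<integral>\<^sup>+ y\<in>S. ennreal (\<bar>f y - c\<bar> powr p) \<partial>lebesgue)"
  by (intro nn_integral_cong) (simp add: localize_def indicator_def)

lemma localize_Lp:
  assumes f: "f \<in> borel_measurable lebesgue" and S: "S \<in> sets lebesgue"
    and I: "(\<integral>\<^sup>+ y\<in>S. ennreal (\<bar>f y - c\<bar> powr p) \<partial>lebesgue) < \<infinity>"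
  shows "Lp_fun p (localize f c S)"
proof -
  have "localize f c S \<in> borel_measurable lebesgue"
    unfolding localize_def[abs_def] using f S by measurable
  then show ?thesis unfolding Lp_fun_def localize_power_integral[OF S] using I by simp
qed

section \<open>The unweighted estimate on a dyadic cube\<close>

lemma level_set_in_localized:
  assumes f: "set_integrable lebesgue (dcube9 m x0) f"
    and x: "x \<in> dcube m x0" and big: "S_tilde f x > ennreal (A * l)"
    and y: "y \<in> dcube (m+1) x0" "\<not> S_tilde f y > ennreal l" and l: "l > 0" and A: "A > 1"
  shows "S_tilde (localize f c (dcube9 m x0)) x > ennreal ((A - 1) * l)"
proof (rule S_tilde_level_local[OF _ _ l A big y(2)])
  show "Sk_tilde k f x = Sk_tilde k (localize f c (dcube9 m x0)) x" if "k \<le> m" for k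
    using Sk_tilde_localize[OF f x that] by simp
  have "dcube (m+1) x = dcube (m+1) x0"
    using x dcube_mono[of m "m+1" x0] by (intro dcube_eq) auto
  then show "y \<in> dcube (m+1) x" using y(1) by simp
qed

lemma measure_le_of_weak_bound:
  assumes a: "a > 0" and b: "b \<ge> 0" and le: "ennreal a * emeasure M S \<le> ennreal b"
  shows "measure M S \<le> b / a"
proof -
  have "emeasure M S \<noteq> \<infinity>" using le a by (auto simp: ennreal_mult_top top_unique)
  then have "ennreal (a * measure M S) \<le> ennreal b"
    using le a by (simp add: emeasure_eq_ennreal_measure ennreal_mult)
  then have "a * measure M S \<le> b" using b by (simp add: ennreal_le_iff)
  then show ?thesis using a by (simp add: field_simps)
qed

text \<open>The good-lambda estimate for Lebesgue measure on a dyadic cube Q whose parent meets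
  the complement of the level set {S~f > l}: choose c from M#_p f \<le> \<gamma> l on the enlarged
  cube, and apply the weak-type bound to the localisation of f at height (A-1) l.\<close>
lemma cube_estimate:
  fixes f :: "'a::euclidean_space \<Rightarrow> real" and p N :: real
  assumes p: "1 \<le> p"
    and weak: "\<And>f::'a \<Rightarrow> real. \<And>l. Lp_fun p f \<Longrightarrow> l > 0 \<Longrightarrow>
        ennreal (l powr p) * emeasure lebesgue {x. S_tilde f x > ennreal l}
          \<le> ennreal (N powr p) * (\<integral>\<^sup>+ x. ennreal (\<bar>f x\<bar> powr p) \<partial>lebesgue)"
    and fl: "locally_integrable f" and l: "l > 0" and A: "A > 1" and \<gamma>: "\<gamma> > 0"
    and y: "y \<in> dcube (m+1) x0" "\<not> S_tilde f y > ennreal l"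
  shows "measure lebesgue ({x. S_tilde f x > ennreal (A * l) \<and> sharp_max p f x \<le> ennreal (\<gamma> * l)} \<inter> dcube m x0)
          \<le> N powr p * 2 powr p * 9 ^ DIM('a) * (\<gamma> / (A - 1)) powr p * measure lebesgue (dcube m x0)"
    (is "measure lebesgue ?EQ \<le> ?bound")
proof (cases "?EQ = {}")
  case True then show ?thesis by simp
next
  case False
  then obtain x1 where x1: "x1 \<in> ?EQ" by blast
  define s where "s = 9 * 2 powr (real_of_int m)"
  define a where "a = dcorner m x0 - (\<Sum>i\<in>Basis. (4 * 2 powr m) *\<^sub>R i)"
  have Q9: "dcube9 m x0 = cube a s" unfolding dcube9_def a_def s_def ..
  have "ennreal (\<gamma> * l) < ennreal (2 * \<gamma> * l)" using \<gamma> l by (intro ennreal_lessI) auto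
  then have "sharp_max p f x1 < ennreal (2 * \<gamma> * l)"
    using x1 by (blast intro: order.strict_trans1)
  moreover have "x1 \<in> cube a s" using x1 dcube_sub_dcube9[of m x0] unfolding Q9 by blast
  ultimately obtain c where c: "(\<integral>\<^sup>+ z\<in>dcube9 m x0. ennreal (\<bar>f z - c\<bar> powr p) \<partial>lebesgue)
      < ennreal ((2 * \<gamma> * l) powr p * s ^ DIM('a))"
    using sharp_max_good_constant[of p f x1 "2 * \<gamma> * l" s a] p \<gamma> l unfolding Q9 s_def by auto
  have osc: "(\<integral>\<^sup>+ z\<in>dcube9 m x0. ennreal (\<bar>f z - c\<bar> powr p) \<partial>lebesgue) < \<infinity>"
    by (rule order.strict_trans[OF c]) simp
  have fm: "f \<in> borel_measurable lebesgue" by (rule locally_integrable_measurable[OF fl])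
  have "emeasure lebesgue (dcube9 m x0) = ennreal (s ^ DIM('a))"
    unfolding Q9 by (rule emeasure_cube) (simp add: s_def)
  then have fint: "set_integrable lebesgue (dcube9 m x0) f"
    by (intro finite_oscillation_set_integrable[OF fm _ _ osc p]) simp_all
  let ?g = "localize f c (dcube9 m x0)"
  have sub: "?EQ \<subseteq> {x. S_tilde ?g x > ennreal ((A - 1) * l)}"
    using level_set_in_localized[OF fint _ _ y l A] by blast
  have "ennreal (((A - 1) * l) powr p) * emeasure lebesgue ?EQ
      \<le> ennreal (((A - 1) * l) powr p) * emeasure lebesgue {x. S_tilde ?g x > ennreal ((A - 1) * l)}"
    using A l by (intro mult_left_mono emeasure_mono sub) simp_all
  also have "\<dots> \<le> ennreal (N powr p) * (\<integral>\<^sup>+ x. ennreal (\<bar>?g x\<bar> powr p) \<partial>lebesgue)"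
    by (rule weak[OF localize_Lp[OF fm _ osc]]) (use A l in simp_all)
  also have "\<dots> \<le> ennreal (N powr p) * ennreal ((2 * \<gamma> * l) powr p * s ^ DIM('a))"
    using c by (intro mult_left_mono) (simp_all add: localize_power_integral)
  also have "\<dots> = ennreal (N powr p * ((2 * \<gamma> * l) powr p * s ^ DIM('a)))"
    by (simp add: ennreal_mult s_def)
  finally have "measure lebesgue ?EQ \<le> N powr p * ((2 * \<gamma> * l) powr p * s ^ DIM('a)) / ((A - 1) * l) powr p"
    by (rule measure_le_of_weak_bound[rotated 2]) (use A l in \<open>simp_all add: s_def\<close>)
  also have "\<dots> = ?bound"
  proof -
    have "(2 * \<gamma> * l) powr p = 2 powr p * \<gamma> powr p * l powr p" using \<gamma> l by (simp add: powr_mult)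
    moreover have "((A - 1) * l) powr p = (A - 1) powr p * l powr p" using A l by (simp add: powr_mult)
    moreover have "(\<gamma> / (A - 1)) powr p = \<gamma> powr p / (A - 1) powr p" using \<gamma> A by (simp add: powr_divide)
    moreover have "s ^ DIM('a) = 9 ^ DIM('a) * measure lebesgue (dcube m x0)"
      by (simp add: s_def measure_dcube power_mult_distrib)
    moreover have "(A - 1) powr p > 0" "l powr p > 0" using A l by auto
    ultimately show ?thesis by (simp add: field_simps)
  qed
  finally show ?thesis .
qed

section \<open>The A_infinity condition on dyadic cubes\<close>

lemma A_infty_measurable: "A_infty w Cw \<delta> \<Longrightarrow> w \<in> borel_measurable lebesgue"
  by (simp add: A_infty_def weight_def)

lemma A_infty_cube:
  assumes "A_infty w Cw \<delta>" "s > 0" "E \<in> sets lebesgue" "E \<subseteq> cube a s"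
  shows "wmeasure w E \<le> ennreal (Cw * (measure lebesgue E / measure lebesgue (cube a s)) powr \<delta>)
           * wmeasure w (cube a s)"
  using assms unfolding A_infty_def by blast

lemma wmeasure_mono: "S \<subseteq> T \<Longrightarrow> wmeasure w S \<le> wmeasure w T"
  unfolding wmeasure_def
  by (intro nn_integral_mono mult_left_mono) (auto simp: indicator_def)

text \<open>A dyadic cube and the open cube of the same corner and side differ by a null set,
  which carries no weight.\<close>
lemma wmeasure_dcube_le_cube:
  "wmeasure w (E \<inter> dcube m x0) \<le> wmeasure w (E \<inter> cube (dcorner m x0) (2 powr m))"
  unfolding wmeasure_def
proof (rule nn_integral_mono_AE)
  show "AE x in lebesgue. ennreal (w x) * indicator (E \<inter> dcube m x0) x
      \<le> ennreal (w x) * indicator (E \<inter> cube (dcorner m x0) (2 powr m)) x"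
    using AE_not_in[OF dcube_diff_cube_null[of m x0]]
    by eventually_elim (auto simp: indicator_def)
qed

lemma powr_const_bound:
  fixes K r u \<delta> :: real
  assumes K: "K \<ge> 0" and u: "u \<ge> 0" and r: "0 \<le> r" "r \<le> K * u" and \<delta>: "0 < \<delta>" "\<delta> \<le> 1"
  shows "r powr \<delta> \<le> max 1 K * u powr \<delta>"
proof -
  have "r powr \<delta> \<le> (K * u) powr \<delta>" using r \<delta> K u by (intro powr_mono2) auto
  also have "\<dots> = K powr \<delta> * u powr \<delta>" using K u by (simp add: powr_mult)
  also have "\<dots> \<le> max 1 K * u powr \<delta>"
  proof (rule mult_right_mono)
    show "K powr \<delta> \<le> max 1 K"
    proof (cases "K \<le> 1")
      case True
      then have "K powr \<delta> \<le> 1" using K \<delta> by (intro powr_le1) auto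
      then show ?thesis by simp
    next
      case False
      then have "K powr \<delta> \<le> K powr 1" using \<delta> by (intro powr_mono) auto
      then show ?thesis using False by simp
    qed
  qed simp
  finally show ?thesis .
qed

lemma weighted_cube:
  fixes E :: "'a::euclidean_space set"
  assumes Aw: "A_infty w Cw \<delta>" and \<delta>: "0 < \<delta>" "\<delta> \<le> 1" and Cw: "Cw > 0"
    and K: "K \<ge> 0" and u: "u \<ge> 0" and E: "E \<in> sets lebesgue"
    and bound: "measure lebesgue (E \<inter> dcube m x0) \<le> K * u * measure lebesgue (dcube m x0)"
  shows "wmeasure w (E \<inter> dcube m x0) \<le> ennreal (max 1 K * Cw * u powr \<delta>) * wmeasure w (dcube m x0)"
proof -
  define B where "B = cube (dcorner m x0) (2 powr m)"
  have B: "B \<subseteq> dcube m x0" "measure lebesgue B = measure lebesgue (dcube m x0)"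
    using cube_sub_dcube by (auto simp: B_def measure_cube measure_dcube)
  have "E \<inter> dcube m x0 \<in> fmeasurable lebesgue"
    by (rule fmeasurableI2[of "dcube m x0"]) (use E in \<open>auto simp: fmeasurable_def emeasure_dcube\<close>)
  then have "measure lebesgue (E \<inter> B) \<le> measure lebesgue (E \<inter> dcube m x0)"
    using B E by (intro measure_mono_fmeasurable) (auto simp: B_def)
  then have "measure lebesgue (E \<inter> B) / measure lebesgue B \<le> K * u"
    using bound B by (simp add: divide_le_eq measure_dcube mult.commute)
  then have "(measure lebesgue (E \<inter> B) / measure lebesgue B) powr \<delta> \<le> max 1 K * u powr \<delta>"
    by (intro powr_const_bound[OF K u _ _ \<delta>]) simp_all
  then have ratio: "Cw * (measure lebesgue (E \<inter> B) / measure lebesgue B) powr \<delta> \<le> max 1 K * Cw * u powr \<delta>"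
    using Cw by (simp add: algebra_simps)
  have "wmeasure w (E \<inter> dcube m x0) \<le> wmeasure w (E \<inter> B)"
    unfolding B_def by (rule wmeasure_dcube_le_cube)
  also have "\<dots> \<le> ennreal (Cw * (measure lebesgue (E \<inter> B) / measure lebesgue B) powr \<delta>) * wmeasure w B"
    unfolding B_def using E by (intro A_infty_cube[OF Aw]) auto
  also have "\<dots> \<le> ennreal (max 1 K * Cw * u powr \<delta>) * wmeasure w (dcube m x0)"
    by (rule mult_mono[OF ennreal_leI[OF ratio] wmeasure_mono[OF B(1)]]) simp_all
  finally show ?thesis .
qed

section \<open>Maximal dyadic cubes\<close>

definition maximal_dcubes :: "'a::euclidean_space set \<Rightarrow> 'a set set" where
  "maximal_dcubes \<Omega> = {dcube m x | m x. dcube m x \<subseteq> \<Omega> \<and> \<not> dcube (m+1) x \<subseteq> \<Omega>}"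

lemma maximal_dcubes_countable: "countable (maximal_dcubes \<Omega>)"
  unfolding maximal_dcubes_def by (rule countable_subset[OF _ dyadic_countable]) auto

lemma maximal_dcubes_sets: "Q \<in> maximal_dcubes \<Omega> \<Longrightarrow> Q \<in> sets lebesgue"
  unfolding maximal_dcubes_def by auto

lemma maximal_dcube_unique:
  assumes max: "\<not> dcube (m1+1) x1 \<subseteq> \<Omega>" and sub: "dcube m2 x2 \<subseteq> \<Omega>"
    and z: "z \<in> dcube m1 x1" "z \<in> dcube m2 x2" and le: "m1 \<le> m2"
  shows "dcube m1 x1 = dcube m2 x2"
proof -
  have same_as_z: "dcube k x = dcube k z" if "z \<in> dcube j x" "j \<le> k" for j k x
    using that dcube_mono[of j k x] by (metis dcube_eq subsetD)
  have "m1 = m2"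
  proof (rule ccontr)
    assume "m1 \<noteq> m2"
    then have "m1 + 1 \<le> m2" using le by simp
    then have "dcube (m1+1) x1 \<subseteq> dcube m2 z"
      using same_as_z[OF z(1), of "m1+1"] dcube_mono[of "m1+1" m2 z] by simp
    then show False using max sub same_as_z[OF z(2) order_refl] by simp
  qed
  then show ?thesis using same_as_z[OF z(1) order_refl] same_as_z[OF z(2) order_refl] by simp
qed

lemma maximal_dcubes_disjoint: "disjoint (maximal_dcubes \<Omega>)"
  unfolding disjoint_def
proof (intro ballI impI)
  fix Q1 Q2 assume Q: "Q1 \<in> maximal_dcubes \<Omega>" "Q2 \<in> maximal_dcubes \<Omega>" and ne: "Q1 \<noteq> Q2"
  obtain m1 x1 where q1: "Q1 = dcube m1 x1" "dcube m1 x1 \<subseteq> \<Omega>" "\<not> dcube (m1+1) x1 \<subseteq> \<Omega>"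
    using Q(1) unfolding maximal_dcubes_def by blast
  obtain m2 x2 where q2: "Q2 = dcube m2 x2" "dcube m2 x2 \<subseteq> \<Omega>" "\<not> dcube (m2+1) x2 \<subseteq> \<Omega>"
    using Q(2) unfolding maximal_dcubes_def by blast
  show "Q1 \<inter> Q2 = {}"
  proof (rule ccontr)
    assume "Q1 \<inter> Q2 \<noteq> {}"
    then obtain z where "z \<in> dcube m1 x1" "z \<in> dcube m2 x2" using q1 q2 by blast
    then have "dcube m1 x1 = dcube m2 x2"
      using maximal_dcube_unique[of m1 x1 \<Omega> m2 x2] maximal_dcube_unique[of m2 x2 \<Omega> m1 x1] q1 q2
      by (cases "m1 \<le> m2") auto
    then show False using ne q1 q2 by simp
  qed
qed

lemma big_dcube_not_sub:
  fixes \<Omega> :: "'a::euclidean_space set"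
  assumes \<Omega>: "\<Omega> \<in> sets lebesgue" "emeasure lebesgue \<Omega> < \<infinity>"
  shows "\<exists>j. \<not> dcube j x \<subseteq> \<Omega>"
proof -
  define M where "M = enn2real (emeasure lebesgue \<Omega>)"
  have M: "emeasure lebesgue \<Omega> = ennreal M" "M \<ge> 0"
    using \<Omega>(2) unfolding M_def by (auto simp: ennreal_enn2real_if less_top)
  define j where "j = \<lceil>log 2 (M + 1)\<rceil>"
  have "M + 1 = 2 powr (log 2 (M + 1))" using M by simp
  also have "\<dots> \<le> 2 powr (real_of_int j)" unfolding j_def by (intro powr_mono) auto
  also have "\<dots> \<le> (2 powr (real_of_int j)) ^ DIM('a)"
    using calculation M by (intro self_le_power) (auto simp: DIM_positive)
  finally have "emeasure lebesgue \<Omega> < emeasure lebesgue (dcube j x)"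
    using M by (simp add: emeasure_dcube ennreal_lessI)
  then show ?thesis using emeasure_mono[of "dcube j x" \<Omega> lebesgue] \<Omega>(1) by (auto simp: not_le[symmetric])
qed

lemma stopping_level:
  fixes \<Omega> :: "'a::euclidean_space set"
  assumes \<Omega>: "\<Omega> \<in> sets lebesgue" "emeasure lebesgue \<Omega> < \<infinity>"
    and j0: "dcube j0 x \<subseteq> \<Omega>"
  shows "\<exists>m. dcube m x \<subseteq> \<Omega> \<and> \<not> dcube (m+1) x \<subseteq> \<Omega>"
proof -
  define P where "P = (\<lambda>n::nat. \<not> dcube (j0 + int n) x \<subseteq> \<Omega>)"
  obtain j1 where j1: "\<not> dcube j1 x \<subseteq> \<Omega>" using big_dcube_not_sub[OF \<Omega>] by blast
  then have "j0 < j1" using j0 dcube_mono[of j1 j0 x] by (cases "j0 < j1") auto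
  then have "P (nat (j1 - j0))" unfolding P_def using j1 by simp
  define n where "n = (LEAST n. P n)"
  have Pn: "P n" unfolding n_def by (rule LeastI) fact
  have n0: "n \<noteq> 0" using Pn j0 unfolding P_def by auto
  have "\<not> P (n - 1)" unfolding n_def by (rule not_less_Least) (use n0 n_def in simp)
  then have "dcube (j0 + int (n - 1)) x \<subseteq> \<Omega>" unfolding P_def by simp
  moreover have "j0 + int (n - 1) + 1 = j0 + int n" using n0 by simp
  ultimately show ?thesis using Pn unfolding P_def by metis
qed

lemma maximal_dcubes_cover:
  assumes \<Omega>: "\<Omega> \<in> sets lebesgue" "emeasure lebesgue \<Omega> < \<infinity>"
    and dyadic_open: "\<And>x. x \<in> \<Omega> \<Longrightarrow> \<exists>j. dcube j x \<subseteq> \<Omega>"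
  shows "\<Union>(maximal_dcubes \<Omega>) = \<Omega>"
proof (intro equalityI subsetI)
  fix x assume "x \<in> \<Omega>"
  then obtain m where "dcube m x \<subseteq> \<Omega>" "\<not> dcube (m+1) x \<subseteq> \<Omega>"
    using dyadic_open stopping_level[OF \<Omega>] by blast
  then have "dcube m x \<in> maximal_dcubes \<Omega>" unfolding maximal_dcubes_def by blast
  then show "x \<in> \<Union>(maximal_dcubes \<Omega>)" using mem_dcube[of x m] by blast
qed (auto simp: maximal_dcubes_def)

lemma wmeasure_disjoint_family:
  assumes w: "w \<in> borel_measurable lebesgue" and \<Q>: "countable \<Q>" "disjoint \<Q>"
    "\<And>Q. Q \<in> \<Q> \<Longrightarrow> Q \<in> sets lebesgue"
    and E: "E \<in> sets lebesgue" "E \<subseteq> \<Union>\<Q>"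
    and local: "\<And>Q. Q \<in> \<Q> \<Longrightarrow> wmeasure w (E \<inter> Q) \<le> c * wmeasure w Q"
  shows "wmeasure w E \<le> c * wmeasure w (\<Union>\<Q>)"
proof -
  define Mw where "Mw = density lebesgue (\<lambda>x. ennreal (w x))"
  have wM: "wmeasure w S = emeasure Mw S" if "S \<in> sets lebesgue" for S
    unfolding Mw_def wmeasure_def using w that by (simp add: emeasure_density)
  have disj: "disjoint_family_on (\<lambda>Q. F \<inter> Q) \<Q>" for F
    using \<Q>(2) unfolding disjoint_family_on_def disjoint_def by blast
  have U: "\<Union>\<Q> \<in> sets lebesgue" using \<Q>(1,3) by (intro sets.countable_Union) auto
  have disj_id: "disjoint_family_on (\<lambda>Q. Q) \<Q>"
    using \<Q>(2) unfolding disjoint_family_on_def disjoint_def by blast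
  have "wmeasure w E = emeasure Mw (\<Union>Q\<in>\<Q>. E \<inter> Q)" using wM[OF E(1)] E(2) by (simp add: Int_absorb2 flip: Int_Union)
  also have "\<dots> = (\<integral>\<^sup>+Q. emeasure Mw (E \<inter> Q) \<partial>count_space \<Q>)"
    using E \<Q> disj by (intro emeasure_UN_countable) (auto simp: Mw_def)
  also have "\<dots> \<le> (\<integral>\<^sup>+Q. c * emeasure Mw Q \<partial>count_space \<Q>)"
    using local wM E \<Q>(3) by (intro nn_integral_mono) auto
  also have "\<dots> = c * (\<integral>\<^sup>+Q. emeasure Mw Q \<partial>count_space \<Q>)"
    by (rule nn_integral_cmult) simp
  also have "(\<integral>\<^sup>+Q. emeasure Mw Q \<partial>count_space \<Q>) = emeasure Mw (\<Union>\<Q>)"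
    using emeasure_UN_countable[of \<Q> "\<lambda>Q. Q" Mw] \<Q> disj_id by (simp add: Mw_def)
  also have "\<dots> = wmeasure w (\<Union>\<Q>)" by (rule wM[OF U, symmetric])
  finally show ?thesis .
qed

lemma good_lambda:
  fixes p N :: real and f :: "'a::euclidean_space \<Rightarrow> real"
  assumes p: "1 \<le> p"
    and weak: "\<And>f::'a \<Rightarrow> real. \<And>l. Lp_fun p f \<Longrightarrow> l > 0 \<Longrightarrow>
        ennreal (l powr p) * emeasure lebesgue {x. S_tilde f x > ennreal l}
          \<le> ennreal (N powr p) * (\<integral>\<^sup>+ x. ennreal (\<bar>f x\<bar> powr p) \<partial>lebesgue)"
    and Aw: "A_infty w Cw \<delta>" and Cw: "Cw > 0" and \<delta>: "0 < \<delta>" "\<delta> \<le> 1"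
    and l: "l > 0" and A: "A > 1" and \<gamma>: "\<gamma> > 0" and fl: "locally_integrable f"
    and fin: "emeasure lebesgue {x. S_tilde f x > ennreal l} < \<infinity>"
  shows "wmeasure w {x. S_tilde f x > ennreal (A * l) \<and> sharp_max p f x \<le> ennreal (\<gamma> * l)}
    \<le> ennreal (max 1 (N powr p * 2 powr p * 9 ^ DIM('a)) * Cw * (\<gamma> / (A - 1)) powr (p * \<delta>))
       * wmeasure w {x. S_tilde f x > ennreal l}"
proof -
  define \<Omega> where "\<Omega> = {x. S_tilde f x > ennreal l}"
  define E where "E = {x. S_tilde f x > ennreal (A * l) \<and> sharp_max p f x \<le> ennreal (\<gamma> * l)}"
  define K where "K = N powr p * 2 powr p * 9 ^ DIM('a)"
  define u where "u = (\<gamma> / (A - 1)) powr p"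
  have K: "K \<ge> 0" and u: "u \<ge> 0" by (simp_all add: K_def u_def)
  have \<Omega>: "\<Omega> \<in> sets lebesgue" "emeasure lebesgue \<Omega> < \<infinity>" using l fin by (simp_all add: \<Omega>_def)
  have cover: "\<Union>(maximal_dcubes \<Omega>) = \<Omega>"
    by (rule maximal_dcubes_cover[OF \<Omega>]) (use S_tilde_level_dyadic_open[OF less_imp_le[OF l], of f] in \<open>auto simp: \<Omega>_def\<close>)
  have "E = {x. S_tilde f x > ennreal (A * l)} \<inter> {x. sharp_max p f x \<le> ennreal (\<gamma> * l)}"
    by (auto simp: E_def)
  then have E: "E \<in> sets lebesgue" using A l by simp
  have "E \<subseteq> \<Omega>"
    using A l by (auto simp: E_def \<Omega>_def intro: order.strict_trans1[rotated] ennreal_leI)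
  have local: "wmeasure w (E \<inter> Q) \<le> ennreal (max 1 K * Cw * u powr \<delta>) * wmeasure w Q"
    if maximal: "Q \<in> maximal_dcubes \<Omega>" for Q
  proof -
    obtain m x0 where Q: "Q = dcube m x0" "\<not> dcube (m+1) x0 \<subseteq> \<Omega>"
      using maximal unfolding maximal_dcubes_def by blast
    then obtain y where y: "y \<in> dcube (m+1) x0" "\<not> S_tilde f y > ennreal l"
      unfolding \<Omega>_def by blast
    have "measure lebesgue (E \<inter> dcube m x0) \<le> K * u * measure lebesgue (dcube m x0)"
      unfolding E_def K_def u_def by (rule cube_estimate[OF p weak fl l A \<gamma> y])
    from weighted_cube[OF Aw \<delta> Cw K u E this] show ?thesis unfolding Q(1) .
  qed
  have "E \<subseteq> \<Union>(maximal_dcubes \<Omega>)" using \<open>E \<subseteq> \<Omega>\<close> cover by simp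
  from wmeasure_disjoint_family[OF A_infty_measurable[OF Aw] maximal_dcubes_countable
      maximal_dcubes_disjoint maximal_dcubes_sets E this local]
  have "wmeasure w E \<le> ennreal (max 1 K * Cw * u powr \<delta>) * wmeasure w \<Omega>" unfolding cover .
  moreover have "u powr \<delta> = (\<gamma> / (A - 1)) powr (p * \<delta>)" using \<gamma> A by (simp add: u_def powr_powr)
  ultimately show ?thesis by (simp add: E_def \<Omega>_def K_def)
qed

theorem propositionA1:
  fixes p N :: real
  assumes p: "1 \<le> p" and N: "0 \<le> N"
    and weak: "\<And>f::'a::euclidean_space \<Rightarrow> real. \<And>l. Lp_fun p f \<Longrightarrow> l > 0 \<Longrightarrow>
        ennreal (l powr p) * emeasure lebesgue {x. S_tilde f x > ennreal l}
          \<le> ennreal (N powr p) * (\<integral>\<^sup>+ x. ennreal (\<bar>f x\<bar> powr p) \<partial>lebesgue)"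
  shows "\<exists>C>0. \<forall>(w::'a \<Rightarrow> real) Cw \<delta>. Cw > 0 \<longrightarrow> 0 < \<delta> \<longrightarrow> \<delta> \<le> 1 \<longrightarrow> A_infty w Cw \<delta> \<longrightarrow>
      (\<forall>l A \<gamma> f. l > 0 \<longrightarrow> A > 1 \<longrightarrow> \<gamma> > 0 \<longrightarrow> locally_integrable f \<longrightarrow>
         emeasure lebesgue {x. S_tilde f x > ennreal l} < \<infinity> \<longrightarrow>
         wmeasure w {x. S_tilde f x > ennreal (A * l) \<and> sharp_max p f x \<le> ennreal (\<gamma> * l)}
           \<le> ennreal (C * Cw * (\<gamma> / (A - 1)) powr (p * \<delta>)) * wmeasure w {x. S_tilde f x > ennreal l})"
proof (intro exI[of _ "max 1 (N powr p * 2 powr p * 9 ^ DIM('a))"] conjI allI impI)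
  fix w :: "'a \<Rightarrow> real" and Cw \<delta> l A \<gamma> :: real and f :: "'a \<Rightarrow> real"
  assume "Cw > 0" "0 < \<delta>" "\<delta> \<le> 1" "A_infty w Cw \<delta>" "l > 0" "A > 1" "\<gamma> > 0"
    "locally_integrable f" "emeasure lebesgue {x. S_tilde f x > ennreal l} < \<infinity>"
  then show "wmeasure w {x. S_tilde f x > ennreal (A * l) \<and> sharp_max p f x \<le> ennreal (\<gamma> * l)}
      \<le> ennreal (max 1 (N powr p * 2 powr p * 9 ^ DIM('a)) * Cw * (\<gamma> / (A - 1)) powr (p * \<delta>))
         * wmeasure w {x. S_tilde f x > ennreal l}"
    by (intro good_lambda[OF p weak]) 
qed simp

end
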